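(* Fix a prompt $q$, $\beta>0$, $\varepsilon>0$, and assume $1-\rho^+(q)-\rho^-(q)>0$ and $0<p_{\mathrm{ref}}(q)<1$. Let $(\pi_k)_{k\ge0}$ be policies such that, for each $k\ge1$, $\pi_k(\cdot\mid q)$ maximizes over all distributions $\pi(\cdot\mid q)$ on $\mathcal O$ the noisy regularized objective \[ \frac{(1-\rho^+(q)-\rho^-(q))\,\bigl(p_\pi(q)-p_{\pi_{k-1}}(q)\bigr)}{\sqrt{\mu_{\pi_{k-1}}(q)(1-\mu_{\pi_{k-1}}(q))+\varepsilon}}-\beta\,\mathrm{KL}\bigl(\pi(\cdot\mid q)\,\|\,\pi_{\mathrm{ref}}(\cdot\mid q)\bigr). \] Then $p_{\pi_k}(q)>p_{\mathrm{ref}}(q)$ for all $k\ge1$.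
   Context: Setting: $\mathcal O$ is a countable set of responses; $r^*:\mathcal Q\times\mathcal O\to\{0,1\}$ is the true binary reward; a policy gives a distribution $\pi(\cdot\mid q)$ on $\mathcal O$; $p_\pi(q)=\mathbb E_{o\sim\pi(\cdot\mid q)}[r^*(q,o)]$. $\pi_{\mathrm{ref}}$ is a fixed reference policy and $p_{\mathrm{ref}}(q)=p_{\pi_{\mathrm{ref}}}(q)$. Flip rates $\rho^+(q),\rho^-(q)\in[0,1]$ are the probabilities that a true reward $0$ is observed as $1$, respectively a true reward $1$ is observed as $0$; $\mu_{\pi}(q)=\rho^+(q)+(1-\rho^+(q)-\rho^-(q))\,p_{\pi}(q)$. $\mathrm{KL}$ is the Kullback–Leibler divergence. *)

theory Defs
  imports "HOL-Probability.Probability"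
begin

definition succ_prob :: "('q \<Rightarrow> 'o \<Rightarrow> real) \<Rightarrow> ('q \<Rightarrow> 'o pmf) \<Rightarrow> 'q \<Rightarrow> real" where
  "succ_prob r \<pi> q = measure_pmf.expectation (\<pi> q) (r q)"

definition noisy_prob :: "real \<Rightarrow> real \<Rightarrow> real \<Rightarrow> real" where
  "noisy_prob rp rm p = rp + (1 - rp - rm) * p"

definition KL_term :: "'o pmf \<Rightarrow> 'o pmf \<Rightarrow> 'o \<Rightarrow> real" where
  "KL_term P R x = (if pmf P x = 0 then 0 else pmf P x * ln (pmf P x / pmf R x))"

definition KL :: "'o pmf \<Rightarrow> 'o pmf \<Rightarrow> ereal" where
  "KL P R = (if set_pmf P \<subseteq> set_pmf R
     then enn2ereal (\<integral>\<^sup>+ x. ennreal (max 0 (KL_term P R x)) \<partial>count_space UNIV)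
        - enn2ereal (\<integral>\<^sup>+ x. ennreal (max 0 (- KL_term P R x)) \<partial>count_space UNIV)
     else \<infinity>)"

definition noisy_obj ::
  "('q \<Rightarrow> 'o \<Rightarrow> real) \<Rightarrow> ('q \<Rightarrow> real) \<Rightarrow> ('q \<Rightarrow> real) \<Rightarrow> real \<Rightarrow> real \<Rightarrow>
   ('q \<Rightarrow> 'o pmf) \<Rightarrow> ('q \<Rightarrow> 'o pmf) \<Rightarrow> 'q \<Rightarrow> ('q \<Rightarrow> 'o pmf) \<Rightarrow> ereal" where
  "noisy_obj r rp rm \<beta> \<epsilon> \<pi>ref \<pi>old q \<pi> =
     (let mu = noisy_prob (rp q) (rm q) (succ_prob r \<pi>old q) in
      ereal ((1 - rp q - rm q) * (succ_prob r \<pi> q - succ_prob r \<pi>old q)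
             / sqrt (mu * (1 - mu) + \<epsilon>))
      - ereal \<beta> * KL (\<pi> q) (\<pi>ref q))"

end

theory Submission
  imports Defs
begin

text \<open>The objective is a positive multiple of the gain in success probability minus
  \<beta> KL(\<sigma> \<parallel> \<pi>ref). If \<pi>k did not beat \<pi>ref, then KL \<ge> 0 would bound its objective by
  that of \<pi>ref itself. But tilting \<pi>ref slightly towards the successful responses raises
  the success probability by order t at a KL cost of order t^2 only, and so strictly beats
  \<pi>ref, contradicting the optimality of \<pi>k.\<close>

lemma KL_term_ge_pmf_diff:
  assumes "set_pmf P \<subseteq> set_pmf R"
  shows "pmf P x - pmf R x \<le> KL_term P R x"
proof (cases "pmf P x = 0")
  case True
  then show ?thesis by (simp add: KL_term_def)
next
  case False
  then have P_pos: "pmf P x > 0" and R_pos: "pmf R x > 0"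
    using assms by (auto simp: set_pmf_iff order_less_le)
  have "pmf P x - pmf R x = pmf P x * (1 - pmf R x / pmf P x)"
    using P_pos by (simp add: field_simps)
  also have "\<dots> \<le> pmf P x * - ln (pmf R x / pmf P x)"
    using P_pos R_pos ln_le_minus_one[of "pmf R x / pmf P x"] by (intro mult_left_mono) auto
  also have "\<dots> = KL_term P R x"
    using P_pos R_pos False by (simp add: KL_term_def ln_div)
  finally show ?thesis .
qed

text \<open>Gibbs' inequality: integrate the pointwise bound above; the total masses of P and R
  (both 1) cancel.\<close>
lemma KL_nonneg: "KL P R \<ge> 0"
proof (cases "set_pmf P \<subseteq> set_pmf R")
  case False
  then show ?thesis by (simp add: KL_def)
next
  case True
  define pos neg where
    "pos = (\<integral>\<^sup>+ x. ennreal (max 0 (KL_term P R x)) \<partial>count_space UNIV)" and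
    "neg = (\<integral>\<^sup>+ x. ennreal (max 0 (- KL_term P R x)) \<partial>count_space UNIV)"
  have pointwise: "ennreal (max 0 (- KL_term P R x)) + ennreal (pmf P x)
      \<le> ennreal (max 0 (KL_term P R x)) + ennreal (pmf R x)" for x
  proof -
    have "max 0 (- KL_term P R x) + pmf P x \<le> max 0 (KL_term P R x) + pmf R x"
      using KL_term_ge_pmf_diff[OF True, of x] by linarith
    then show ?thesis
      by (metis ennreal_leI ennreal_plus max.cobounded1 pmf_nonneg)
  qed
  have "neg + 1 = (\<integral>\<^sup>+ x. ennreal (max 0 (- KL_term P R x)) + ennreal (pmf P x) \<partial>count_space UNIV)"
    unfolding neg_def by (subst nn_integral_add) (auto simp: nn_integral_pmf_eq_1)
  also have "\<dots> \<le> (\<integral>\<^sup>+ x. ennreal (max 0 (KL_term P R x)) + ennreal (pmf R x) \<partial>count_space UNIV)"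
    by (rule nn_integral_mono[OF pointwise])
  also have "\<dots> = pos + 1"
    unfolding pos_def by (subst nn_integral_add) (auto simp: nn_integral_pmf_eq_1)
  finally have "neg + 1 \<le> pos + 1" .
  then have "neg \<le> pos"
    by (simp add: add.commute ennreal_add_left_cancel_le)
  then have "enn2ereal neg \<le> enn2ereal pos"
    by (simp add: less_eq_ennreal.rep_eq)
  then show ?thesis
    using True by (simp add: KL_def pos_def neg_def ereal_diff_positive)
qed

lemma nn_integral_pmf_times_step:
  assumes "\<alpha> \<ge> 0" "\<gamma> \<ge> 0"
  shows "(\<integral>\<^sup>+ x. ennreal (pmf R x * (if x \<in> S then \<alpha> else \<gamma>)) \<partial>count_space UNIV)
     = ennreal (\<alpha> * measure R S + \<gamma> * (1 - measure R S))"
proof -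
  have split: "ennreal (pmf R x * (if x \<in> S then \<alpha> else \<gamma>)) =
      ennreal \<alpha> * (ennreal (pmf R x) * indicator S x)
      + ennreal \<gamma> * (ennreal (pmf R x) * indicator (- S) x)" for x
    using assms by (auto simp: indicator_def ennreal_mult' mult.commute)
  have measure: "(\<integral>\<^sup>+ x. ennreal (pmf R x) * indicator A x \<partial>count_space UNIV) = ennreal (measure R A)"
    for A
    by (simp flip: nn_integral_measure_pmf add: measure_pmf.emeasure_eq_measure)
  have "measure R (- S) = 1 - measure R S"
    using measure_pmf.prob_compl[of S R] by (simp add: Compl_eq_Diff_UNIV)
  then show ?thesis
    using assms
    by (simp only: split, subst nn_integral_add)
       (auto simp: nn_integral_cmult measure simp flip: ennreal_mult' ennreal_plus)
qed

text \<open>Only meaningful when a, b \<ge> 0 and a R(S) + b (1 - R(S)) = 1; otherwise embed_pmf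
  yields junk.\<close>
definition reweight_pmf :: "'a pmf \<Rightarrow> 'a set \<Rightarrow> real \<Rightarrow> real \<Rightarrow> 'a pmf" where
  "reweight_pmf R S a b = embed_pmf (\<lambda>x. pmf R x * (if x \<in> S then a else b))"

context
  fixes R :: "'a pmf" and S :: "'a set" and a b :: real
  assumes a_nonneg: "a \<ge> 0" and b_nonneg: "b \<ge> 0"
    and normalized: "a * measure R S + b * (1 - measure R S) = 1"
begin

lemma pmf_reweight_pmf: "pmf (reweight_pmf R S a b) x = pmf R x * (if x \<in> S then a else b)"
  unfolding reweight_pmf_def
  using a_nonneg b_nonneg normalized
  by (intro pmf_embed_pmf) (auto simp: nn_integral_pmf_times_step)

lemma measure_reweight_pmf: "measure (reweight_pmf R S a b) S = a * measure R S"
proof -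
  have "ennreal (measure (reweight_pmf R S a b) S)
      = (\<integral>\<^sup>+ x. ennreal (pmf (reweight_pmf R S a b) x) * indicator S x \<partial>count_space UNIV)"
    by (simp flip: nn_integral_measure_pmf add: measure_pmf.emeasure_eq_measure)
  also have "\<dots> = (\<integral>\<^sup>+ x. ennreal (pmf R x * (if x \<in> S then a else 0)) \<partial>count_space UNIV)"
    by (intro nn_integral_cong) (auto simp: pmf_reweight_pmf indicator_def)
  also have "\<dots> = ennreal (a * measure R S)"
    using a_nonneg by (simp add: nn_integral_pmf_times_step)
  finally show ?thesis
    using a_nonneg by simp
qed

lemma KL_reweight_pmf:
  "KL (reweight_pmf R S a b) R = ereal (measure R S * (a * ln a) + (1 - measure R S) * (b * ln b))"
proof -
  define p A B where "p = measure R S" and "A = a * ln a" and "B = b * ln b"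
  have p_bounds: "0 \<le> p" "p \<le> 1"
    by (simp_all add: p_def)
  have KL_term_eq: "KL_term (reweight_pmf R S a b) R x = pmf R x * (if x \<in> S then A else B)" for x
    by (cases "pmf R x = 0") (auto simp: KL_term_def pmf_reweight_pmf A_def B_def)
  have pos_part: "max 0 (KL_term (reweight_pmf R S a b) R x)
      = pmf R x * (if x \<in> S then max 0 A else max 0 B)" for x
    by (simp add: KL_term_eq max_mult_distrib_left)
  have neg_part: "max 0 (- KL_term (reweight_pmf R S a b) R x)
      = pmf R x * (if x \<in> S then max 0 (- A) else max 0 (- B))" for x
    by (simp add: KL_term_eq max_mult_distrib_left)
  have support: "set_pmf (reweight_pmf R S a b) \<subseteq> set_pmf R"
    by (auto simp: set_pmf_iff pmf_reweight_pmf)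
  have "KL (reweight_pmf R S a b) R
      = ereal (p * max 0 A + (1 - p) * max 0 B) - ereal (p * max 0 (- A) + (1 - p) * max 0 (- B))"
    using p_bounds
    by (simp add: KL_def pos_part neg_part support nn_integral_pmf_times_step mult.commute
        flip: p_def del: ennreal_plus)
  also have "\<dots> = ereal (p * (max 0 A - max 0 (- A)) + (1 - p) * (max 0 B - max 0 (- B)))"
    by (simp add: algebra_simps)
  also have "\<dots> = ereal (p * A + (1 - p) * B)"
    by (simp add: max_def)
  finally show ?thesis
    by (simp add: p_def A_def B_def)
qed

lemma KL_reweight_pmf_le_chi_square:
  "KL (reweight_pmf R S a b) R
     \<le> ereal (measure R S * (a * (a - 1)) + (1 - measure R S) * (b * (b - 1)))"
proof -
  have x_ln_x: "x * ln x \<le> x * (x - 1)" if "x \<ge> 0" for x :: real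
    using that by (cases "x = 0") (auto intro: mult_left_mono ln_le_minus_one)
  show ?thesis
    unfolding KL_reweight_pmf
    using x_ln_x[OF a_nonneg] x_ln_x[OF b_nonneg]
    by (auto intro!: add_mono mult_left_mono)
qed

end

text \<open>The tilt has density 1 + t on S: it gains t R(S) while, by the chi-square bound, its
  KL cost is only t^2 R(S) / (1 - R(S)); so a small t wins.\<close>
lemma exists_pmf_gain_exceeds_KL:
  fixes R :: "'a pmf"
  assumes p_pos: "0 < measure R S" and p_lt1: "measure R S < 1"
    and c_pos: "c > 0" and beta_pos: "\<beta> > 0"
  shows "\<exists>\<sigma> K. KL \<sigma> R = ereal K \<and> \<beta> * K < c * (measure \<sigma> S - measure R S)"
proof -
  define p where "p = measure R S"
  define t where "t = min (c * (1 - p) / (2 * \<beta>)) ((1 - p) / p)"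
  define u where "u = t * p / (1 - p)"
  have "0 < p" "p < 1"
    using p_pos p_lt1 by (simp_all add: p_def)
  then have t_pos: "t > 0"
    using c_pos beta_pos by (simp add: t_def)
  have "t \<le> c * (1 - p) / (2 * \<beta>)"
    unfolding t_def by (rule min.cobounded1)
  then have "\<beta> * t \<le> c / 2 * (1 - p)"
    using beta_pos by (simp add: field_simps)
  then have t_small: "\<beta> * t / (1 - p) \<le> c / 2"
    using \<open>p < 1\<close> by (simp add: divide_le_eq)
  have "t \<le> (1 - p) / p"
    unfolding t_def by (rule min.cobounded2)
  then have "t * p \<le> 1 - p"
    using \<open>0 < p\<close> by (simp add: le_divide_eq)
  then have u_le1: "u \<le> 1"
    using \<open>p < 1\<close> by (simp add: u_def divide_le_eq)
  have u_eq: "(1 - p) * u = t * p"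
    using \<open>p < 1\<close> by (simp add: u_def)
  have a_nonneg: "1 + t \<ge> 0" and b_nonneg: "1 - u \<ge> 0"
    using t_pos u_le1 by simp_all
  have normalized: "(1 + t) * p + (1 - u) * (1 - p) = 1"
    using u_eq by (simp add: algebra_simps)
  define \<sigma> where "\<sigma> = reweight_pmf R S (1 + t) (1 - u)"
  define K where "K = p * ((1 + t) * ln (1 + t)) + (1 - p) * ((1 - u) * ln (1 - u))"
  have KL_eq: "KL \<sigma> R = ereal K"
    unfolding \<sigma>_def K_def p_def
    using a_nonneg b_nonneg normalized by (intro KL_reweight_pmf) (simp_all add: p_def)
  have "ereal K \<le> ereal (p * ((1 + t) * (1 + t - 1)) + (1 - p) * ((1 - u) * (1 - u - 1)))"
    unfolding KL_eq[symmetric] \<sigma>_def p_def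
    using a_nonneg b_nonneg normalized by (intro KL_reweight_pmf_le_chi_square) (simp_all add: p_def)
  also have "p * ((1 + t) * (1 + t - 1)) + (1 - p) * ((1 - u) * (1 - u - 1)) = t * p * (t + u)"
    using u_eq by algebra
  finally have "\<beta> * K \<le> t * p * (\<beta> * (t + u))"
    using beta_pos by (simp add: mult_left_mono)
  also have "\<beta> * (t + u) = \<beta> * t / (1 - p)"
    using \<open>p < 1\<close> by (simp add: u_def field_simps)
  also have "t * p * (\<beta> * t / (1 - p)) \<le> t * p * (c / 2)"
    using t_small t_pos \<open>0 < p\<close> by (intro mult_left_mono) auto
  also have "\<dots> < c * (t * p)"
    using t_pos \<open>0 < p\<close> c_pos by simp
  also have "c * (t * p) = c * (measure \<sigma> S - measure R S)"
    using a_nonneg b_nonneg normalized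
    by (simp add: \<sigma>_def measure_reweight_pmf p_def algebra_simps)
  finally show ?thesis
    using KL_eq by blast
qed

lemma measure_gt_of_KL_regularized_maximizer:
  fixes R P :: "'a pmf"
  assumes "0 < measure R S" "measure R S < 1" "c > 0" and beta_pos: "\<beta> > 0"
    and maximizer: "\<And>\<sigma>. ereal (c * (measure_pmf.prob \<sigma> S - x0)) - ereal \<beta> * KL \<sigma> R
        \<le> ereal (c * (measure P S - x0)) - ereal \<beta> * KL P R"
  shows "measure R S < measure P S"
proof (rule ccontr)
  assume "\<not> ?thesis"
  then have no_gain: "c * (measure P S - x0) \<le> c * (measure R S - x0)"
    using \<open>c > 0\<close> by simp
  obtain \<sigma> K where KL_\<sigma>: "KL \<sigma> R = ereal K"
    and gain: "\<beta> * K < c * (measure \<sigma> S - measure R S)"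
    using exists_pmf_gain_exceeds_KL assms(1-4) by blast
  have "ereal (c * (measure P S - x0)) - ereal \<beta> * KL P R \<le> ereal (c * (measure P S - x0))"
    using KL_nonneg[of P R] beta_pos by (cases "KL P R") auto
  also have "\<dots> \<le> ereal (c * (measure R S - x0))"
    using no_gain by simp
  also have "\<dots> < ereal (c * (measure \<sigma> S - x0)) - ereal \<beta> * KL \<sigma> R"
    using gain by (simp add: KL_\<sigma> algebra_simps)
  finally show False
    using maximizer[of \<sigma>] by simp
qed

lemma succ_prob_eq_measure:
  assumes "\<And>x. r q x \<in> {0, 1}"
  shows "succ_prob r \<pi> q = measure (\<pi> q) {x. r q x = 1}"
proof -
  define S where "S = {x. r q x = 1}"
  have indicator: "r q = indicator S"
    using assms by (auto simp: fun_eq_iff indicator_def S_def)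
  show ?thesis
    unfolding succ_prob_def indicator by (simp add: indicator_eq_1_iff)
qed

lemma noisy_prob_bounds:
  assumes "0 \<le> rp" "rp \<le> 1" "0 \<le> rm" "rm \<le> 1" "0 \<le> p" "p \<le> 1"
  shows "0 \<le> noisy_prob rp rm p" "noisy_prob rp rm p \<le> 1"
proof -
  have convex: "noisy_prob rp rm p = (1 - p) * rp + p * (1 - rm)"
    by (simp add: noisy_prob_def algebra_simps)
  show "0 \<le> noisy_prob rp rm p"
    unfolding convex using assms by simp
  show "noisy_prob rp rm p \<le> 1"
    unfolding convex using assms convex_bound_le[of rp 1 "1 - rm" "1 - p" p] by simp
qed

lemma noisy_obj_eq_scaled_gain:
  assumes "0 \<le> rp q" "rp q \<le> 1" "0 \<le> rm q" "rm q \<le> 1" "1 - rp q - rm q > 0" "\<epsilon> > 0"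
    and "0 \<le> succ_prob r \<pi>old q" "succ_prob r \<pi>old q \<le> 1"
  obtains c where "c > 0"
    and "\<And>\<pi>. noisy_obj r rp rm \<beta> \<epsilon> \<pi>ref \<pi>old q \<pi>
      = ereal (c * (succ_prob r \<pi> q - succ_prob r \<pi>old q)) - ereal \<beta> * KL (\<pi> q) (\<pi>ref q)"
proof
  define mu where "mu = noisy_prob (rp q) (rm q) (succ_prob r \<pi>old q)"
  have "0 \<le> mu" "mu \<le> 1"
    unfolding mu_def using assms by (simp_all add: noisy_prob_bounds)
  then have "sqrt (mu * (1 - mu) + \<epsilon>) > 0"
    using \<open>\<epsilon> > 0\<close> by (simp add: add_nonneg_pos)
  then show "(1 - rp q - rm q) / sqrt (mu * (1 - mu) + \<epsilon>) > 0"
    using assms by simp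
  show "noisy_obj r rp rm \<beta> \<epsilon> \<pi>ref \<pi>old q \<pi>
      = ereal ((1 - rp q - rm q) / sqrt (mu * (1 - mu) + \<epsilon>)
          * (succ_prob r \<pi> q - succ_prob r \<pi>old q)) - ereal \<beta> * KL (\<pi> q) (\<pi>ref q)" for \<pi>
    by (simp add: noisy_obj_def mu_def Let_def)
qed

theorem proposition2:
  fixes r :: "'q \<Rightarrow> 'o::countable \<Rightarrow> real"
    and rp rm :: "'q \<Rightarrow> real"
    and \<pi>ref :: "'q \<Rightarrow> 'o pmf"
    and \<pi> :: "nat \<Rightarrow> 'q \<Rightarrow> 'o pmf"
    and q :: 'q and \<beta> \<epsilon> :: real
  assumes r_bin: "\<And>q x. r q x \<in> {0, 1}"
    and rp_rng: "\<And>q. 0 \<le> rp q \<and> rp q \<le> 1"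
    and rm_rng: "\<And>q. 0 \<le> rm q \<and> rm q \<le> 1"
    and beta_pos: "\<beta> > 0"
    and eps_pos: "\<epsilon> > 0"
    and gap: "1 - rp q - rm q > 0"
    and ref_pos: "0 < succ_prob r \<pi>ref q"
    and ref_lt1: "succ_prob r \<pi>ref q < 1"
    and opt: "\<And>k \<sigma>. k \<ge> 1 \<Longrightarrow>
        noisy_obj r rp rm \<beta> \<epsilon> \<pi>ref (\<pi> (k - 1)) q \<sigma>
          \<le> noisy_obj r rp rm \<beta> \<epsilon> \<pi>ref (\<pi> (k - 1)) q (\<pi> k)"
  shows "\<forall>k\<ge>1. succ_prob r (\<pi> k) q > succ_prob r \<pi>ref q"
proof (intro allI impI)
  fix k :: nat
  assume "k \<ge> 1"
  define S where "S = {x. r q x = 1}"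
  have succ: "succ_prob r \<pi>' q = measure (\<pi>' q) S" for \<pi>'
    unfolding S_def using r_bin by (rule succ_prob_eq_measure)
  obtain c where "c > 0"
    and obj: "\<And>\<pi>'. noisy_obj r rp rm \<beta> \<epsilon> \<pi>ref (\<pi> (k - 1)) q \<pi>'
      = ereal (c * (measure (\<pi>' q) S - succ_prob r (\<pi> (k - 1)) q))
        - ereal \<beta> * KL (\<pi>' q) (\<pi>ref q)"
    using noisy_obj_eq_scaled_gain[of rp q rm \<epsilon> r "\<pi> (k - 1)" \<beta> \<pi>ref] rp_rng rm_rng gap eps_pos
    by (auto simp: succ)
  have "measure (\<pi>ref q) S < measure (\<pi> k q) S"
  proof (rule measure_gt_of_KL_regularized_maximizer)
    show "ereal (c * (measure_pmf.prob \<sigma> S - succ_prob r (\<pi> (k - 1)) q))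
          - ereal \<beta> * KL \<sigma> (\<pi>ref q)
        \<le> ereal (c * (measure (\<pi> k q) S - succ_prob r (\<pi> (k - 1)) q))
          - ereal \<beta> * KL (\<pi> k q) (\<pi>ref q)"
      for \<sigma>
      using opt[OF \<open>k \<ge> 1\<close>, of "\<lambda>_. \<sigma>"] unfolding obj by simp
  qed (use ref_pos ref_lt1 \<open>c > 0\<close> beta_pos in \<open>simp_all add: succ\<close>)
  then show "succ_prob r (\<pi> k) q > succ_prob r \<pi>ref q"
    by (simp add: succ)
qed

end
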